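(* Let $N\ge 2$ and $R\ge N+1$ be integers. There is a set $\mathcal{F}$ of flows in the Clos network $C_{N,R}$, each with demand $1$ or $\tfrac12$ (and satisfying the demand assumption below), such that $OPT(\mathcal{F})=\tfrac32$.
   Context: Clos network $C_{N,R}$: a directed graph with $N$ middle switches $M_1,\dots,M_N$, $R$ input switches $I_1,\dots,I_R$, $R$ output switches $O_1,\dots,O_R$, source servers $s_i^k$ and destination servers $t_i^k$ ($i\in[R]$, $k\in[N]$), and edges $s_i^kI_i$, $I_iM_m$, $M_mO_i$, $O_it_i^k$ for all $i\in[R]$, $m,k\in[N]$; all links have capacity $1$. A flow $f$ has a source server $s(f)$ of input switch $I_{i(f)}$, a destination server $t(f)$ of output switch $O_{j(f)}$, and a positive demand $\mathrm{dem}(f)$. A set of flows must satisfy: the total demand of flows leaving any source server is at most $1$, and the total demand of flows entering any destination server is at most $1$. A routing $r$ assigns each flow a single middle switch $r(f)\in[N]$. The congestion of $r$ is $\max_{i\in[R],m\in[N]}\max\{\sum_{f:i(f)=i,r(f)=m}\mathrm{dem}(f),\ \sum_{f:j(f)=i,r(f)=m}\mathrm{dem}(f)\}$, and $OPT(\mathcal{F})$ is the minimum congestion over all routings of $\mathcal{F}$. *)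

theory Defs
  imports Complex_Main
begin

text \<open>Indices are 0-based: input/output switches i < R,
  servers k < N, middle switches m < N. A flow records the input switch i(f),
  the source server index k (server s_{i(f)}^k), the output switch j(f), the
  destination server index l (server t_{j(f)}^l), and its demand.
  A set of flows is a list (distinct flows may have identical data).\<close>

datatype flow = Flow (fin: nat) (fsrv: nat) (fout: nat) (tsrv: nat) (dem: real)

definition valid_flows :: "nat \<Rightarrow> nat \<Rightarrow> flow list \<Rightarrow> bool" where
  "valid_flows N R F \<longleftrightarrow>
     (\<forall>f\<in>set F. fin f < R \<and> fsrv f < N \<and> fout f < R \<and> tsrv f < N \<and> dem f > 0) \<and>
     (\<forall>i<R. \<forall>k<N. (\<Sum>x | x < length F \<and> fin (F!x) = i \<and> fsrv (F!x) = k. dem (F!x)) \<le> 1) \<and>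
     (\<forall>j<R. \<forall>l<N. (\<Sum>x | x < length F \<and> fout (F!x) = j \<and> tsrv (F!x) = l. dem (F!x)) \<le> 1)"

text \<open>A routing assigns to the x-th flow the middle switch r!x < N.\<close>

definition routings :: "nat \<Rightarrow> flow list \<Rightarrow> nat list set" where
  "routings N F = {r. length r = length F \<and> set r \<subseteq> {0..<N}}"

definition congestion :: "nat \<Rightarrow> nat \<Rightarrow> flow list \<Rightarrow> nat list \<Rightarrow> real" where
  "congestion N R F r = Max {max (\<Sum>x | x < length F \<and> fin (F!x) = i \<and> r!x = m. dem (F!x))
                                 (\<Sum>x | x < length F \<and> fout (F!x) = i \<and> r!x = m. dem (F!x))
                             | i m. i < R \<and> m < N}"

definition OPT :: "nat \<Rightarrow> nat \<Rightarrow> flow list \<Rightarrow> real" where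
  "OPT N R F = Min (congestion N R F ` routings N F)"

end

theory Submission
  imports Defs
begin

(* Write n = N - 1. Take unit flows A_k from I_0 to O_0 and B_k from I_1 to O_1 (k < n), all on
   distinct servers, a unit flow C from I_1 to O_2, and two half flows D from I_0 to O_1 and
   E from I_0 to O_2 leaving the same source server. Routing A_k and B_k through M_k and C, D, E
   through M_n loads every link by at most 1, except I_0 M_n and M_n O_2, which carry 3/2.
   Conversely, below congestion 3/2 two flows that share an input or output switch and whose
   demands add up to 3/2 use different middle switches. The n + 1 unit flows of I_1 then occupy
   all N middle switches, and D, which avoids the B_k at O_1, is routed with C; likewise A_k and
   D occupy all middle switches, so E, which avoids the A_k at I_0, is routed with D, hence with
   C, and O_2 is overloaded. *)

definition in_load :: "flow list \<Rightarrow> nat list \<Rightarrow> nat \<Rightarrow> nat \<Rightarrow> real" where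
  "in_load F r i m = (\<Sum>x | x < length F \<and> fin (F!x) = i \<and> r!x = m. dem (F!x))"

definition out_load :: "flow list \<Rightarrow> nat list \<Rightarrow> nat \<Rightarrow> nat \<Rightarrow> real" where
  "out_load F r j m = (\<Sum>x | x < length F \<and> fout (F!x) = j \<and> r!x = m. dem (F!x))"

lemma congestion_eq_Max_load:
  "congestion N R F r = Max {max (in_load F r i m) (out_load F r i m) | i m. i < R \<and> m < N}"
  by (simp add: congestion_def in_load_def out_load_def)

lemma load_le_congestion:
  assumes "i < R" "m < N"
  shows "in_load F r i m \<le> congestion N R F r" and "out_load F r i m \<le> congestion N R F r"
proof -
  have "max (in_load F r i m) (out_load F r i m) \<le> congestion N R F r"
    unfolding congestion_eq_Max_load using assms by (intro Max_ge finite_image_set2) auto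
  then show "in_load F r i m \<le> congestion N R F r" "out_load F r i m \<le> congestion N R F r"
    by auto
qed

lemma congestion_le:
  assumes "0 < R" "0 < N"
    and "\<And>i m. i < R \<Longrightarrow> m < N \<Longrightarrow> in_load F r i m \<le> c"
    and "\<And>j m. j < R \<Longrightarrow> m < N \<Longrightarrow> out_load F r j m \<le> c"
  shows "congestion N R F r \<le> c"
  unfolding congestion_eq_Max_load using assms by (subst Max_le_iff) (auto intro: finite_image_set2)

lemma finite_routings: "finite (routings N F)"
  unfolding routings_def using finite_lists_length_eq[of "{0..<N}" "length F"]
  by (simp add: conj_commute)

lemma OPT_eqI:
  assumes "r \<in> routings N F" "congestion N R F r \<le> c"
    and "\<And>r'. r' \<in> routings N F \<Longrightarrow> c \<le> congestion N R F r'"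
  shows "OPT N R F = c"
proof -
  have "OPT N R F \<le> congestion N R F r"
    unfolding OPT_def using assms(1) finite_routings by (intro Min_le) auto
  moreover have "c \<le> OPT N R F"
    unfolding OPT_def using assms(1,3) finite_routings by (subst Min_ge_iff) auto
  ultimately show ?thesis using assms(2) by linarith
qed

lemma routing_nth_less:
  assumes "r \<in> routings N F" "x < length F"
  shows "r!x < N"
proof -
  have "r!x \<in> set r" using assms unfolding routings_def by simp
  then show ?thesis using assms(1) unfolding routings_def by auto
qed

lemma routes_apart_at_input:
  assumes "r \<in> routings N F" "\<forall>f\<in>set F. 0 \<le> dem f" "x \<noteq> y" "x < length F" "y < length F"
    and "fin (F!x) = fin (F!y)" "fin (F!x) < R" "congestion N R F r < dem (F!x) + dem (F!y)"
  shows "r!x \<noteq> r!y"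
proof
  assume same: "r!x = r!y"
  have "(\<Sum>z\<in>{x, y}. dem (F!z)) \<le> in_load F r (fin (F!x)) (r!x)"
    unfolding in_load_def using assms same by (intro sum_mono2) auto
  also have "\<dots> \<le> congestion N R F r"
    using assms routing_nth_less by (intro load_le_congestion) auto
  finally show False using assms(3,8) by simp
qed

lemma routes_apart_at_output:
  assumes "r \<in> routings N F" "\<forall>f\<in>set F. 0 \<le> dem f" "x \<noteq> y" "x < length F" "y < length F"
    and "fout (F!x) = fout (F!y)" "fout (F!x) < R" "congestion N R F r < dem (F!x) + dem (F!y)"
  shows "r!x \<noteq> r!y"
proof
  assume same: "r!x = r!y"
  have "(\<Sum>z\<in>{x, y}. dem (F!z)) \<le> out_load F r (fout (F!x)) (r!x)"
    unfolding out_load_def using assms same by (intro sum_mono2) auto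
  also have "\<dots> \<le> congestion N R F r"
    using assms routing_nth_less by (intro load_le_congestion) auto
  finally show False using assms(3,8) by simp
qed

lemma ex_same_route_if_inj_on:
  assumes "r \<in> routings N F" "S \<subseteq> {..<length F}" "card S = N" "inj_on ((!) r) S" "x < length F"
  shows "\<exists>y\<in>S. r!x = r!y"
proof -
  have "(!) r ` S = {..<N}"
    by (rule card_subset_eq) (use assms routing_nth_less card_image[OF assms(4)] in auto)
  with routing_nth_less[OF assms(1,5)] show ?thesis
    by blast
qed

lemma sum_fiber_le_one:
  fixes g :: "'a \<Rightarrow> real"
  assumes "inj_on h A" "\<And>x. x \<in> A \<Longrightarrow> g x \<le> 1"
  shows "(\<Sum>x | x \<in> A \<and> h x = v. g x) \<le> 1"
proof (cases "\<exists>a\<in>A. h a = v")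
  case True
  then obtain a where "a \<in> A" "h a = v" by blast
  with assms(1) have "{x. x \<in> A \<and> h x = v} = {a}" by (auto dest: inj_onD)
  with \<open>a \<in> A\<close> assms(2) show ?thesis by simp
next
  case False
  then have "{x. x \<in> A \<and> h x = v} = {}" by blast
  then show ?thesis by (simp only: sum.empty zero_le_one)
qed

lemma sum_fiber_le_one_plus:
  fixes g :: "'a \<Rightarrow> real"
  assumes "finite A" "c \<in> A" "inj_on h (A - {c})" "\<And>x. x \<in> A \<Longrightarrow> 0 \<le> g x \<and> g x \<le> 1"
  shows "(\<Sum>x | x \<in> A \<and> h x = v. g x) \<le> 1 + g c"
proof -
  let ?S = "{x. x \<in> A - {c} \<and> h x = v}"
  have "(\<Sum>x | x \<in> A \<and> h x = v. g x) \<le> (\<Sum>x\<in>insert c ?S. g x)"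
    using assms by (intro sum_mono2) auto
  also have "\<dots> \<le> g c + (\<Sum>x\<in>?S. g x)"
    using assms(1) by (simp add: sum.insert_if)
  also have "(\<Sum>x\<in>?S. g x) \<le> 1"
    using assms(3,4) by (intro sum_fiber_le_one) auto
  finally show ?thesis by simp
qed

(* Flow x is A_x for x < n, B_(x - n) for n \<le> x < 2n, and then C, D, E. *)
definition hard_flow :: "nat \<Rightarrow> nat \<Rightarrow> flow" where
  "hard_flow n x =
    (if x < n then Flow 0 x 0 x 1
     else if x < 2*n then Flow 1 (x - n) 1 (x - n) 1
     else if x = 2*n then Flow 1 n 2 0 1
     else if x = 2*n + 1 then Flow 0 n 1 n (1/2)
     else Flow 0 n 2 n (1/2))"

definition hard_flows :: "nat \<Rightarrow> flow list" where
  "hard_flows n = map (hard_flow n) [0..<2*n + 3]"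

definition hard_route :: "nat \<Rightarrow> nat \<Rightarrow> nat" where
  "hard_route n x = (if x < n then x else if x < 2*n then x - n else n)"

definition hard_routing :: "nat \<Rightarrow> nat list" where
  "hard_routing n = map (hard_route n) [0..<2*n + 3]"

lemma length_hard_flows [simp]: "length (hard_flows n) = 2*n + 3"
  by (simp add: hard_flows_def)

lemma nth_hard_flows [simp]: "x < 2*n + 3 \<Longrightarrow> hard_flows n ! x = hard_flow n x"
  by (simp add: hard_flows_def del: upt_Suc)

lemma nth_hard_routing [simp]: "x < 2*n + 3 \<Longrightarrow> hard_routing n ! x = hard_route n x"
  by (simp add: hard_routing_def del: upt_Suc)

lemma dem_hard_flow: "dem (hard_flow n x) = 1 \<or> dem (hard_flow n x) = 1/2"
  by (simp add: hard_flow_def)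

lemma dem_hard_flow_bounds: "0 \<le> dem (hard_flow n x) \<and> dem (hard_flow n x) \<le> 1"
  by (simp add: hard_flow_def)

lemma switches_hard_flow: "fin (hard_flow n x) \<le> 1" "fout (hard_flow n x) \<le> 2"
  by (simp_all add: hard_flow_def)

lemma hard_routing_in_routings: "hard_routing n \<in> routings (Suc n) (hard_flows n)"
  by (auto simp: routings_def hard_routing_def hard_route_def)

lemma in_load_hard_routing:
  "in_load (hard_flows n) (hard_routing n) i m =
     (\<Sum>x | x \<in> {..<2*n + 3} \<and> (fin (hard_flow n x), hard_route n x) = (i, m). dem (hard_flow n x))"
  unfolding in_load_def by (intro sum.cong) auto

lemma out_load_hard_routing:
  "out_load (hard_flows n) (hard_routing n) j m =
     (\<Sum>x | x \<in> {..<2*n + 3} \<and> (fout (hard_flow n x), hard_route n x) = (j, m). dem (hard_flow n x))"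
  unfolding out_load_def by (intro sum.cong) auto

lemma congestion_hard_routing:
  assumes "0 < R"
  shows "congestion (Suc n) R (hard_flows n) (hard_routing n) \<le> 3/2"
proof (rule congestion_le)
  let ?A = "{..<2*n + 3}" and ?e = "2*n + 2"
  have e: "dem (hard_flow n ?e) = 1/2"
    by (simp add: hard_flow_def)
  have "inj_on (\<lambda>x. (fin (hard_flow n x), hard_route n x)) (?A - {?e})"
    unfolding inj_on_def hard_flow_def hard_route_def by auto
  then have "in_load (hard_flows n) (hard_routing n) i m \<le> 1 + dem (hard_flow n ?e)" for i m
    unfolding in_load_hard_routing by (intro sum_fiber_le_one_plus) (simp_all add: dem_hard_flow_bounds)
  then show "in_load (hard_flows n) (hard_routing n) i m \<le> 3/2" for i m
    unfolding e by simp
  have "inj_on (\<lambda>x. (fout (hard_flow n x), hard_route n x)) (?A - {?e})"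
    unfolding inj_on_def hard_flow_def hard_route_def by auto
  then have "out_load (hard_flows n) (hard_routing n) j m \<le> 1 + dem (hard_flow n ?e)" for j m
    unfolding out_load_hard_routing by (intro sum_fiber_le_one_plus) (simp_all add: dem_hard_flow_bounds)
  then show "out_load (hard_flows n) (hard_routing n) j m \<le> 3/2" for j m
    unfolding e by simp
qed (use assms in simp_all)

lemma source_load_hard_flows:
  "(\<Sum>x | x < length (hard_flows n) \<and> fin (hard_flows n ! x) = i \<and> fsrv (hard_flows n ! x) = k.
      dem (hard_flows n ! x)) \<le> 1"
proof -
  let ?src = "\<lambda>x. (fin (hard_flow n x), fsrv (hard_flow n x))"
  have "(\<Sum>x | x < length (hard_flows n) \<and> fin (hard_flows n ! x) = i \<and> fsrv (hard_flows n ! x) = k.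
          dem (hard_flows n ! x)) = (\<Sum>x | x \<in> {..<2*n + 3} \<and> ?src x = (i, k). dem (hard_flow n x))"
    by (intro sum.cong) auto
  also have "\<dots> \<le> 1"
  proof (cases "(i, k) = (0, n)")
    case True
    then have "{x. x \<in> {..<2*n + 3} \<and> ?src x = (i, k)} = {2*n + 1, 2*n + 2}"
      by (auto simp: hard_flow_def)
    then show ?thesis by (simp add: hard_flow_def)
  next
    case False
    then have "{x. x \<in> {..<2*n + 3} \<and> ?src x = (i, k)} = {x. x \<in> {..<2*n + 1} \<and> ?src x = (i, k)}"
      by (auto simp: hard_flow_def)
    moreover have "inj_on ?src {..<2*n + 1}"
      unfolding inj_on_def hard_flow_def by auto
    then have "(\<Sum>x | x \<in> {..<2*n + 1} \<and> ?src x = (i, k). dem (hard_flow n x)) \<le> 1"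
      by (rule sum_fiber_le_one) (simp add: dem_hard_flow_bounds)
    ultimately show ?thesis by simp
  qed
  finally show ?thesis .
qed

lemma destination_load_hard_flows:
  assumes "0 < n"
  shows "(\<Sum>x | x < length (hard_flows n) \<and> fout (hard_flows n ! x) = j \<and> tsrv (hard_flows n ! x) = l.
           dem (hard_flows n ! x)) \<le> 1"
proof -
  let ?dst = "\<lambda>x. (fout (hard_flow n x), tsrv (hard_flow n x))"
  have "(\<Sum>x | x < length (hard_flows n) \<and> fout (hard_flows n ! x) = j \<and> tsrv (hard_flows n ! x) = l.
          dem (hard_flows n ! x)) = (\<Sum>x | x \<in> {..<2*n + 3} \<and> ?dst x = (j, l). dem (hard_flow n x))"
    by (intro sum.cong) auto
  also have "inj_on ?dst {..<2*n + 3}"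
    using assms unfolding inj_on_def hard_flow_def by auto
  then have "(\<Sum>x | x \<in> {..<2*n + 3} \<and> ?dst x = (j, l). dem (hard_flow n x)) \<le> 1"
    by (rule sum_fiber_le_one) (simp add: dem_hard_flow_bounds)
  finally show ?thesis .
qed

lemma valid_hard_flows:
  assumes "0 < n" "3 \<le> R"
  shows "valid_flows (Suc n) R (hard_flows n)"
  unfolding valid_flows_def
proof (intro conjI)
  show "\<forall>f\<in>set (hard_flows n). fin f < R \<and> fsrv f < Suc n \<and> fout f < R \<and> tsrv f < Suc n \<and> 0 < dem f"
    using assms(2) by (auto simp: hard_flows_def hard_flow_def)
qed (use source_load_hard_flows destination_load_hard_flows[OF assms(1)] in blast)+

lemma hard_flows_routes_apart:
  assumes "3 \<le> R" "r \<in> routings (Suc n) (hard_flows n)" "congestion (Suc n) R (hard_flows n) r < 3/2"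
    and "x < 2*n + 3" "y < 2*n + 3" "x \<noteq> y" "3/2 \<le> dem (hard_flow n x) + dem (hard_flow n y)"
    and "fin (hard_flow n x) = fin (hard_flow n y) \<or> fout (hard_flow n x) = fout (hard_flow n y)"
  shows "r!x \<noteq> r!y"
proof -
  have nonneg: "\<forall>f\<in>set (hard_flows n). 0 \<le> dem f"
    by (auto simp: hard_flows_def dem_hard_flow_bounds)
  have switches: "fin (hard_flow n x) < R" "fout (hard_flow n x) < R"
    using assms(1) switches_hard_flow[of n x] by simp_all
  have overload: "congestion (Suc n) R (hard_flows n) r < dem (hard_flow n x) + dem (hard_flow n y)"
    using assms(3,7) by linarith
  from assms(8) show ?thesis
  proof
    assume "fin (hard_flow n x) = fin (hard_flow n y)"
    then show ?thesis
      using routes_apart_at_input[OF assms(2) nonneg assms(6), of R] assms(4,5) switches overload by simp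
  next
    assume "fout (hard_flow n x) = fout (hard_flow n y)"
    then show ?thesis
      using routes_apart_at_output[OF assms(2) nonneg assms(6), of R] assms(4,5) switches overload by simp
  qed
qed

lemma congestion_hard_flows_ge:
  assumes "3 \<le> R" and r: "r \<in> routings (Suc n) (hard_flows n)"
  shows "3/2 \<le> congestion (Suc n) R (hard_flows n) r"
proof (rule ccontr)
  assume "\<not> 3/2 \<le> congestion (Suc n) R (hard_flows n) r"
  then have apart: "r!x \<noteq> r!y"
    if "x < 2*n + 3" "y < 2*n + 3" "x \<noteq> y" "3/2 \<le> dem (hard_flow n x) + dem (hard_flow n y)"
      "fin (hard_flow n x) = fin (hard_flow n y) \<or> fout (hard_flow n x) = fout (hard_flow n y)" for x y
    using hard_flows_routes_apart[OF assms(1) r _ that] by simp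
  have meets: "\<exists>y\<in>S. r!x = r!y"
    if "S \<subseteq> {..<2*n + 3}" "card S = Suc n" "x < 2*n + 3"
      "\<And>y z. y \<in> S \<Longrightarrow> z \<in> S \<Longrightarrow> y \<noteq> z \<Longrightarrow> r!y \<noteq> r!z" for S x
    using that by (intro ex_same_route_if_inj_on[OF r]) (auto intro: inj_onI)
  obtain y where y: "y \<in> {n..2*n}" "r!(2*n + 1) = r!y"
    using meets[of "{n..2*n}" "2*n + 1"] apart by (force simp: hard_flow_def)
  then have CD: "r!(2*n + 1) = r!(2*n)"
    using apart[of "2*n + 1" y] by (cases "y = 2*n") (simp_all add: hard_flow_def)
  obtain y where y: "y \<in> insert (2*n + 1) {..<n}" "r!(2*n + 2) = r!y"
    using meets[of "insert (2*n + 1) {..<n}" "2*n + 2"] apart by (force simp: hard_flow_def)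
  then have DE: "r!(2*n + 2) = r!(2*n + 1)"
    using apart[of "2*n + 2" y] by (cases "y = 2*n + 1") (simp_all add: hard_flow_def)
  show False
    using apart[of "2*n" "2*n + 2"] CD DE by (simp add: hard_flow_def)
qed

lemma OPT_hard_flows:
  assumes "3 \<le> R"
  shows "OPT (Suc n) R (hard_flows n) = 3/2"
proof (rule OPT_eqI)
  show "hard_routing n \<in> routings (Suc n) (hard_flows n)"
    by (rule hard_routing_in_routings)
  show "congestion (Suc n) R (hard_flows n) (hard_routing n) \<le> 3/2"
    using assms by (intro congestion_hard_routing) simp
  show "3/2 \<le> congestion (Suc n) R (hard_flows n) r" if "r \<in> routings (Suc n) (hard_flows n)" for r
    using assms that by (rule congestion_hard_flows_ge)
qed

theorem mainTheorem2:
  fixes N R :: nat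
  assumes "N \<ge> 2" and "R \<ge> N + 1"
  shows "\<exists>F. valid_flows N R F \<and> (\<forall>f\<in>set F. dem f = 1 \<or> dem f = 1/2) \<and> OPT N R F = 3/2"
proof -
  obtain n where N: "N = Suc n" and "0 < n"
    using assms(1) by (cases N) auto
  have "3 \<le> R"
    using assms by simp
  show ?thesis
  proof (intro exI conjI)
    show "valid_flows N R (hard_flows n)"
      unfolding N using \<open>0 < n\<close> \<open>3 \<le> R\<close> by (rule valid_hard_flows)
    show "\<forall>f\<in>set (hard_flows n). dem f = 1 \<or> dem f = 1/2"
      unfolding hard_flows_def set_map using dem_hard_flow by blast
    show "OPT N R (hard_flows n) = 3/2"
      unfolding N using \<open>3 \<le> R\<close> by (rule OPT_hard_flows)
  qed
qed

end
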